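(* Let $n\le m$ and $0<\rho<n$. Then $$\left\lfloor\frac{q^{mn}}{V_\rho(q^m,n)}\right\rfloor+1\le K_{\mathrm R}(q^m,n,\rho)\le q^{m(n-\rho)}.$$
   Context: The rank $\mathrm{rk}(\mathbf x)$ of $\mathbf x\in\mathrm{GF}(q^m)^n$ is the maximum number of its coordinates linearly independent over $\mathrm{GF}(q)$, and $d_{\mathrm R}(\mathbf x,\mathbf y)=\mathrm{rk}(\mathbf x-\mathbf y)$. The rank covering radius of $C\subseteq\mathrm{GF}(q^m)^n$ is $\max_{\mathbf x}\min_{\mathbf c\in C}d_{\mathrm R}(\mathbf x,\mathbf c)$, and $K_{\mathrm R}(q^m,n,\rho)$ is the minimum cardinality of a code in $\mathrm{GF}(q^m)^n$ with rank covering radius $\rho$. $V_\rho(q^m,n)=\sum_{u=0}^\rho {n\brack u}\alpha(m,u)$ is the volume of a ball of rank radius $\rho$, where $\alpha(m,0)=1$, $\alpha(m,u)=\prod_{i=0}^{u-1}(q^m-q^i)$ and ${n\brack u}=\alpha(n,u)/\alpha(u,u)$. *)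

theory Defs
  imports Complex_Main
begin

text \<open>GF(q^m) is modelled by a finite field type 'a; GF(q) by a subfield K of it.\<close>

definition is_subfield :: "'a::field set \<Rightarrow> bool" where
  "is_subfield K \<longleftrightarrow> 0 \<in> K \<and> 1 \<in> K \<and>
     (\<forall>a\<in>K. \<forall>b\<in>K. a + b \<in> K \<and> a * b \<in> K) \<and>
     (\<forall>a\<in>K. - a \<in> K) \<and> (\<forall>a\<in>K. a \<noteq> 0 \<longrightarrow> inverse a \<in> K)"

text \<open>Vectors of GF(q^m)^n: functions nat => 'a vanishing outside {0..<n}.\<close>
definition vecs :: "nat \<Rightarrow> (nat \<Rightarrow> 'a::zero) set" where
  "vecs n = {x. \<forall>i\<ge>n. x i = 0}"

definition lin_indep_over :: "'a::field set \<Rightarrow> (nat \<Rightarrow> 'a) \<Rightarrow> nat set \<Rightarrow> bool" where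
  "lin_indep_over K x S \<longleftrightarrow>
     (\<forall>c. (\<forall>i\<in>S. c i \<in> K) \<longrightarrow> (\<Sum>i\<in>S. c i * x i) = 0 \<longrightarrow> (\<forall>i\<in>S. c i = 0))"

definition rk :: "'a::field set \<Rightarrow> nat \<Rightarrow> (nat \<Rightarrow> 'a) \<Rightarrow> nat" where
  "rk K n x = Max {card S | S. S \<subseteq> {0..<n} \<and> lin_indep_over K x S}"

definition rank_dist :: "'a::field set \<Rightarrow> nat \<Rightarrow> (nat \<Rightarrow> 'a) \<Rightarrow> (nat \<Rightarrow> 'a) \<Rightarrow> nat" where
  "rank_dist K n x y = rk K n (\<lambda>i. x i - y i)"

definition rank_cov_radius :: "'a::field set \<Rightarrow> nat \<Rightarrow> (nat \<Rightarrow> 'a) set \<Rightarrow> nat" where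
  "rank_cov_radius K n C = Max ((\<lambda>x. Min (rank_dist K n x ` C)) ` vecs n)"

definition K_R :: "'a::field set \<Rightarrow> nat \<Rightarrow> nat \<Rightarrow> nat" where
  "K_R K n \<rho> = Inf {card C | C. C \<subseteq> vecs n \<and> C \<noteq> {} \<and> rank_cov_radius K n C = \<rho>}"

definition alpha :: "nat \<Rightarrow> nat \<Rightarrow> nat \<Rightarrow> real" where
  "alpha q m u = (\<Prod>i<u. real q ^ m - real q ^ i)"

definition gauss_binom :: "nat \<Rightarrow> nat \<Rightarrow> nat \<Rightarrow> real" where
  "gauss_binom q n u = alpha q n u / alpha q u u"

definition ball_vol :: "nat \<Rightarrow> nat \<Rightarrow> nat \<Rightarrow> nat \<Rightarrow> real" where
  "ball_vol q m n \<rho> = (\<Sum>u = 0..\<rho>. gauss_binom q n u * alpha q m u)"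

end

(*
  Upper bound: the vectors vanishing on the first rho coordinates form a code of size
  q^(m(n-rho)) and covering radius exactly rho; a vector whose first rho coordinates are
  independent over GF(q) is at distance rho from every codeword.

  Lower bound: appending a coordinate to x raises the rank iff the new coordinate lies
  outside the GF(q)-span of the old ones, which gives the q-Pascal recursion for the number
  of vectors of rank u and hence |B_rho| = V_rho(q^m, n). The balls around a covering code
  cover GF(q^m)^n, so |C| V_rho >= q^(mn), and equality (a perfect code) is impossible: if
  the balls were pairwise disjoint, codewords agreeing on the first n - 2 rho coordinates
  would have a common point at distance rho from both, so |C| <= q^(m(n - 2 rho)); but a
  vector of rank at most rho has all coordinates in the span of rho elements of GF(q^m),
  so |B_rho| < q^(m min(n, 2 rho)) and such a code cannot cover.
*)

theory Submission
  imports Defs "HOL-Library.FuncSet"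
begin

section \<open>Spans over a subfield\<close>

lemma
  assumes "is_subfield K"
  shows subfield_zero: "0 \<in> K" and subfield_one: "1 \<in> K"
    and subfield_add: "a \<in> K \<Longrightarrow> b \<in> K \<Longrightarrow> a + b \<in> K"
    and subfield_mult: "a \<in> K \<Longrightarrow> b \<in> K \<Longrightarrow> a * b \<in> K"
    and subfield_uminus: "a \<in> K \<Longrightarrow> - a \<in> K"
    and subfield_inverse: "a \<in> K \<Longrightarrow> inverse a \<in> K"
  using assms unfolding is_subfield_def by (auto simp: inverse_eq_divide)

lemma subfield_diff: "is_subfield K \<Longrightarrow> a \<in> K \<Longrightarrow> b \<in> K \<Longrightarrow> a - b \<in> K"
  using subfield_add[of K a "- b"] subfield_uminus[of K b] by simp

lemma subfield_divide: "is_subfield K \<Longrightarrow> a \<in> K \<Longrightarrow> b \<in> K \<Longrightarrow> a / b \<in> K"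
  using subfield_mult[of K a "inverse b"] subfield_inverse[of K b] by (simp add: divide_inverse)

lemma card_subfield_ge_2:
  assumes "is_subfield (K :: 'a::{field,finite} set)"
  shows "2 \<le> card K"
proof -
  have "{0, 1} \<subseteq> K" using subfield_zero[OF assms] subfield_one[OF assms] by auto
  then have "card {0::'a, 1} \<le> card K" by (intro card_mono) auto
  then show ?thesis by simp
qed

definition span_over :: "'a::field set \<Rightarrow> (nat \<Rightarrow> 'a) \<Rightarrow> nat set \<Rightarrow> 'a set" where
  "span_over K x S = {(\<Sum>i\<in>S. c i * x i) | c. \<forall>i\<in>S. c i \<in> K}"

definition subspace_over :: "'a::field set \<Rightarrow> 'a set \<Rightarrow> bool" where
  "subspace_over K V \<longleftrightarrow>
     0 \<in> V \<and> (\<forall>a\<in>V. \<forall>b\<in>V. a + b \<in> V) \<and> (\<forall>k\<in>K. \<forall>a\<in>V. k * a \<in> V)"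

lemma subspace_over_diff:
  assumes "is_subfield K" "subspace_over K V" "a \<in> V" "b \<in> V"
  shows "a - b \<in> V"
proof -
  have "(- 1) * b \<in> V"
    using assms subfield_uminus[OF assms(1) subfield_one[OF assms(1)]] unfolding subspace_over_def by blast
  then show ?thesis using assms(2,3) unfolding subspace_over_def by force
qed

lemma span_overI: "(\<And>i. i \<in> S \<Longrightarrow> c i \<in> K) \<Longrightarrow> (\<Sum>i\<in>S. c i * x i) \<in> span_over K x S"
  unfolding span_over_def by blast

lemma span_over_cong: "(\<And>i. i \<in> S \<Longrightarrow> x i = y i) \<Longrightarrow> span_over K x S = span_over K y S"
  unfolding span_over_def by (simp cong: sum.cong)

lemma subspace_over_sum:
  assumes "subspace_over K V" "finite A" "\<And>i. i \<in> A \<Longrightarrow> f i \<in> V"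
  shows "sum f A \<in> V"
  using assms(2,3) by induction (use assms(1) in \<open>auto simp: subspace_over_def\<close>)

lemma subspace_span_over:
  assumes K: "is_subfield K"
  shows "subspace_over K (span_over K x S)"
  unfolding subspace_over_def
proof (intro conjI ballI)
  show "0 \<in> span_over K x S"
    using span_overI[of S "\<lambda>_. 0" K x] subfield_zero[OF K] by simp
next
  fix a b assume "a \<in> span_over K x S" "b \<in> span_over K x S"
  then obtain c d where "a = (\<Sum>i\<in>S. c i * x i)" "\<forall>i\<in>S. c i \<in> K"
    and "b = (\<Sum>i\<in>S. d i * x i)" "\<forall>i\<in>S. d i \<in> K" unfolding span_over_def by blast
  then show "a + b \<in> span_over K x S"
    using span_overI[of S "\<lambda>i. c i + d i" K x] subfield_add[OF K]
    by (simp add: sum.distrib distrib_right)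
next
  fix k a assume "k \<in> K" "a \<in> span_over K x S"
  then obtain c where "a = (\<Sum>i\<in>S. c i * x i)" "\<forall>i\<in>S. c i \<in> K" unfolding span_over_def by blast
  then show "k * a \<in> span_over K x S"
    using span_overI[of S "\<lambda>i. k * c i" K x] subfield_mult[OF K] \<open>k \<in> K\<close>
    by (simp add: sum_distrib_left mult.assoc)
qed

lemma sum_indicator_mult:
  "finite S \<Longrightarrow> i \<in> S \<Longrightarrow> (\<Sum>j\<in>S. (if j = i then 1 else 0) * x j) = (x i :: 'a::semiring_1)"
  by (simp add: if_distrib[of "\<lambda>c. c * _"] cong: if_cong)

lemma span_over_superset:
  assumes "is_subfield K" "finite S" "i \<in> S"
  shows "x i \<in> span_over K x S"
  using span_overI[of S "\<lambda>j. if j = i then 1 else 0" K x] sum_indicator_mult[OF assms(2,3), of x]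
    subfield_zero[OF assms(1)] subfield_one[OF assms(1)] by simp

lemma span_over_minimal:
  assumes "subspace_over K V" "finite S" "\<And>i. i \<in> S \<Longrightarrow> x i \<in> V"
  shows "span_over K x S \<subseteq> V"
proof
  fix a assume "a \<in> span_over K x S"
  then obtain c where "a = (\<Sum>i\<in>S. c i * x i)" "\<forall>i\<in>S. c i \<in> K" unfolding span_over_def by blast
  then show "a \<in> V"
    using subspace_over_sum[OF assms(1,2)] assms(1,3) by (auto simp: subspace_over_def)
qed

lemma span_over_mono:
  assumes "is_subfield K" "finite T" "S \<subseteq> T"
  shows "span_over K x S \<subseteq> span_over K x T"
  using assms by (intro span_over_minimal subspace_span_over span_over_superset)
    (auto intro: finite_subset)

lemma lin_indep_over_cong:
  "(\<And>i. i \<in> S \<Longrightarrow> x i = y i) \<Longrightarrow> lin_indep_over K x S = lin_indep_over K y S"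
  unfolding lin_indep_over_def by (simp cong: sum.cong)

lemma lin_indep_overD:
  "lin_indep_over K x S \<Longrightarrow> (\<And>j. j \<in> S \<Longrightarrow> c j \<in> K) \<Longrightarrow> (\<Sum>j\<in>S. c j * x j) = 0
    \<Longrightarrow> i \<in> S \<Longrightarrow> c i = 0"
  unfolding lin_indep_over_def by blast

lemma lin_indep_over_nonzero:
  assumes K: "is_subfield K" and "finite S" "lin_indep_over K x S" "i \<in> S"
  shows "x i \<noteq> 0"
proof
  assume "x i = 0"
  then have comb: "(\<Sum>j\<in>S. (if j = i then 1 else 0) * x j) = 0"
    using sum_indicator_mult[OF assms(2,4), of x] by simp
  have "(if i = i then 1 else 0) = (0::'a)"
    by (rule lin_indep_overD[OF assms(3) _ comb assms(4)]) (simp add: subfield_zero[OF K] subfield_one[OF K])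
  then show False by simp
qed

lemma lin_indep_over_insert:
  assumes K: "is_subfield K" and fin: "finite S" and indep: "lin_indep_over K x S"
    and "i \<notin> S" and notin: "x i \<notin> span_over K x S"
  shows "lin_indep_over K x (insert i S)"
  unfolding lin_indep_over_def
proof (intro allI impI)
  fix c assume cK: "\<forall>j\<in>insert i S. c j \<in> K" and "(\<Sum>j\<in>insert i S. c j * x j) = 0"
  then have sum_eq: "c i * x i = - (\<Sum>j\<in>S. c j * x j)"
    using fin \<open>i \<notin> S\<close> by (simp add: eq_neg_iff_add_eq_0)
  have "c i = 0"
  proof (rule ccontr)
    assume "c i \<noteq> 0"
    then have "x i = (c i * x i) / c i" by simp
    also have "\<dots> = - (\<Sum>j\<in>S. c j * x j) / c i" by (simp only: sum_eq)
    also have "\<dots> = (\<Sum>j\<in>S. (- (c j / c i)) * x j)"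
      by (simp add: sum_divide_distrib[symmetric] sum_negf)
    also have "\<dots> \<in> span_over K x S"
      using cK subfield_divide[OF K] subfield_uminus[OF K] by (intro span_overI) auto
    finally show False using notin by simp
  qed
  with sum_eq have "(\<Sum>j\<in>S. c j * x j) = 0" by simp
  with \<open>c i = 0\<close> cK show "\<forall>j\<in>insert i S. c j = 0"
    using lin_indep_overD[OF indep] by auto
qed

lemma card_span_over_lin_indep:
  assumes K: "is_subfield K" and fin: "finite S" and indep: "lin_indep_over K x S"
  shows "card (span_over K x S) = card K ^ card S"
proof -
  let ?comb = "\<lambda>c. \<Sum>i\<in>S. c i * x i"
  have "span_over K x S = ?comb ` (S \<rightarrow>\<^sub>E K)"
  proof
    show "span_over K x S \<subseteq> ?comb ` (S \<rightarrow>\<^sub>E K)"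
    proof
      fix a assume "a \<in> span_over K x S"
      then obtain c where a: "a = ?comb c" "\<forall>i\<in>S. c i \<in> K" unfolding span_over_def by blast
      have "a = ?comb (restrict c S)" unfolding a(1) by (rule sum.cong) auto
      then show "a \<in> ?comb ` (S \<rightarrow>\<^sub>E K)" by (rule image_eqI[where x="restrict c S"]) (use a(2) in simp)
    qed
    show "?comb ` (S \<rightarrow>\<^sub>E K) \<subseteq> span_over K x S"
      by (auto intro: span_overI)
  qed
  moreover have "inj_on ?comb (S \<rightarrow>\<^sub>E K)"
  proof (rule inj_onI)
    fix c d assume c: "c \<in> S \<rightarrow>\<^sub>E K" and d: "d \<in> S \<rightarrow>\<^sub>E K" and "?comb c = ?comb d"
    then have "(\<Sum>i\<in>S. (c i - d i) * x i) = 0" by (simp add: sum_subtractf left_diff_distrib)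
    moreover have "\<And>i. i \<in> S \<Longrightarrow> c i - d i \<in> K" using c d subfield_diff[OF K] by auto
    ultimately have "c i - d i = 0" if "i \<in> S" for i
      using lin_indep_overD[OF indep, of "\<lambda>i. c i - d i" i] that by blast
    then show "c = d" using c d by (intro PiE_ext) auto
  qed
  ultimately show ?thesis using fin by (simp add: card_image card_PiE)
qed

definition coord_span :: "'a::field set \<Rightarrow> nat \<Rightarrow> (nat \<Rightarrow> 'a) \<Rightarrow> 'a set" where
  "coord_span K n x = span_over K x {0..<n}"

lemma coord_span_cong: "(\<And>i. i < n \<Longrightarrow> x i = y i) \<Longrightarrow> coord_span K n x = coord_span K n y"
  unfolding coord_span_def by (rule span_over_cong) simp

lemma subspace_coord_span: "is_subfield K \<Longrightarrow> subspace_over K (coord_span K n x)"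
  unfolding coord_span_def by (rule subspace_span_over)

lemma coord_span_Suc:
  "coord_span K (Suc n) x = {s + k * x n | s k. s \<in> coord_span K n x \<and> k \<in> K}"
proof
  show "coord_span K (Suc n) x \<subseteq> {s + k * x n | s k. s \<in> coord_span K n x \<and> k \<in> K}"
  proof
    fix a assume "a \<in> coord_span K (Suc n) x"
    then obtain c where a: "a = (\<Sum>i\<in>{0..<Suc n}. c i * x i)" "\<forall>i\<in>{0..<Suc n}. c i \<in> K"
      unfolding coord_span_def span_over_def by blast
    have "(\<Sum>i\<in>{0..<n}. c i * x i) \<in> coord_span K n x"
      unfolding coord_span_def using a(2) by (intro span_overI) simp
    moreover have "a = (\<Sum>i\<in>{0..<n}. c i * x i) + c n * x n" using a(1) by simp
    moreover have "c n \<in> K" using a(2) by simp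
    ultimately show "a \<in> {s + k * x n | s k. s \<in> coord_span K n x \<and> k \<in> K}" by blast
  qed
  show "{s + k * x n | s k. s \<in> coord_span K n x \<and> k \<in> K} \<subseteq> coord_span K (Suc n) x"
  proof safe
    fix s k assume "s \<in> coord_span K n x" "k \<in> K"
    then obtain c where c: "s = (\<Sum>i\<in>{0..<n}. c i * x i)" "\<forall>i\<in>{0..<n}. c i \<in> K"
      unfolding coord_span_def span_over_def by blast
    have "s + k * x n = (\<Sum>i\<in>{0..<Suc n}. (c(n := k)) i * x i)"
      unfolding c(1) by (simp add: sum.cong[OF refl, of _ "c(n := k)" c])
    also have "\<dots> \<in> coord_span K (Suc n) x"
      unfolding coord_span_def using c(2) \<open>k \<in> K\<close> by (intro span_overI) auto
    finally show "s + k * x n \<in> coord_span K (Suc n) x" .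
  qed
qed

lemma coord_span_Suc_absorb:
  assumes K: "is_subfield K" and "x n \<in> coord_span K n x"
  shows "coord_span K (Suc n) x = coord_span K n x"
proof
  show "coord_span K (Suc n) x \<subseteq> coord_span K n x"
    using subspace_coord_span[OF K, of n x] assms(2) unfolding coord_span_Suc subspace_over_def by auto
  show "coord_span K n x \<subseteq> coord_span K (Suc n) x"
    unfolding coord_span_def by (rule span_over_mono[OF K]) auto
qed

lemma card_coord_span_Suc:
  fixes x :: "nat \<Rightarrow> 'a::{field,finite}"
  assumes K: "is_subfield K" and notin: "x n \<notin> coord_span K n x"
  shows "card (coord_span K (Suc n) x) = card (coord_span K n x) * card K"
proof -
  let ?V = "coord_span K n x"
  have V: "subspace_over K ?V" by (rule subspace_coord_span[OF K])
  have "inj_on (\<lambda>(s, k). s + k * x n) (?V \<times> K)"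
  proof (rule inj_onI, clarify)
    fix s k s' k' assume s: "s \<in> ?V" "s' \<in> ?V" and k: "k \<in> K" "k' \<in> K"
      and eq: "s + k * x n = s' + k' * x n"
    show "s = s' \<and> k = k'"
    proof (cases "k = k'")
      case False
      then have "x n = inverse (k - k') * (s' - s)"
        using eq by (simp add: field_simps)
      also have "\<dots> \<in> ?V"
        using V subspace_over_diff[OF K V s(2,1)] k subfield_inverse[OF K] subfield_diff[OF K]
        unfolding subspace_over_def by simp
      finally show ?thesis using notin by simp
    qed (use eq in simp)
  qed
  moreover have "coord_span K (Suc n) x = (\<lambda>(s, k). s + k * x n) ` (?V \<times> K)"
    unfolding coord_span_Suc by auto
  ultimately have "card (coord_span K (Suc n) x) = card (?V \<times> K)"
    by (simp add: card_image)
  then show ?thesis by (simp add: card_cartesian_product)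
qed

section \<open>Rank\<close>

lemma rk_attained: "\<exists>S. S \<subseteq> {0..<n} \<and> lin_indep_over K x S \<and> card S = rk K n x"
  and card_le_rk: "S \<subseteq> {0..<n} \<Longrightarrow> lin_indep_over K x S \<Longrightarrow> card S \<le> rk K n x"
proof -
  let ?M = "{card S | S. S \<subseteq> {0..<n} \<and> lin_indep_over K x S}"
  have fin: "finite ?M" by (rule finite_subset[of _ "card ` Pow {0..<n}"]) auto
  have "lin_indep_over K x {}" unfolding lin_indep_over_def by simp
  then have "?M \<noteq> {}" by blast
  then have "rk K n x \<in> ?M" unfolding rk_def using fin by (rule Max_in[rotated])
  then show "\<exists>S. S \<subseteq> {0..<n} \<and> lin_indep_over K x S \<and> card S = rk K n x" by auto
  show "card S \<le> rk K n x" if "S \<subseteq> {0..<n}" "lin_indep_over K x S"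
    unfolding rk_def using that fin by (intro Max_ge) auto
qed

lemma rk_le: "rk K n x \<le> n"
proof -
  obtain S where "S \<subseteq> {0..<n}" "card S = rk K n x" using rk_attained by blast
  then show ?thesis using card_mono[of "{0..<n}" S] by simp
qed

lemma rk_cong:
  assumes "\<And>i. i < n \<Longrightarrow> x i = y i"
  shows "rk K n x = rk K n y"
proof -
  have "S \<subseteq> {0..<n} \<Longrightarrow> lin_indep_over K x S = lin_indep_over K y S" for S
    using assms by (intro lin_indep_over_cong) auto
  then have "{card S | S. S \<subseteq> {0..<n} \<and> lin_indep_over K x S} =
      {card S | S. S \<subseteq> {0..<n} \<and> lin_indep_over K y S}"
    by blast
  then show ?thesis unfolding rk_def by simp
qed

lemma rk_mono:
  assumes "r \<le> n"
  shows "rk K r x \<le> rk K n x"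
proof -
  obtain S where S: "S \<subseteq> {0..<r}" "lin_indep_over K x S" "card S = rk K r x"
    using rk_attained by blast
  then have "S \<subseteq> {0..<n}" using assms by auto
  with S show ?thesis using card_le_rk[of S n K x] by simp
qed

lemma card_coord_span:
  assumes K: "is_subfield K"
  shows "card (coord_span K n x) = card K ^ rk K n x"
proof -
  obtain S where S: "S \<subseteq> {0..<n}" "lin_indep_over K x S" "card S = rk K n x"
    using rk_attained by blast
  have fin: "finite S" using S(1) finite_subset by blast
  have spans: "x i \<in> span_over K x S" if "i < n" for i
  proof (rule ccontr)
    assume notin: "x i \<notin> span_over K x S"
    then have "i \<notin> S" using span_over_superset[OF K fin] by blast
    then have "card (insert i S) \<le> rk K n x"
      using S that lin_indep_over_insert[OF K fin S(2) _ notin] by (intro card_le_rk) auto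
    then show False using S(3) fin \<open>i \<notin> S\<close> by simp
  qed
  have "coord_span K n x = span_over K x S"
  proof
    show "coord_span K n x \<subseteq> span_over K x S"
      unfolding coord_span_def by (rule span_over_minimal[OF subspace_span_over[OF K]]) (use spans in auto)
    show "span_over K x S \<subseteq> coord_span K n x"
      unfolding coord_span_def by (rule span_over_mono[OF K _ S(1)]) simp
  qed
  then show ?thesis using card_span_over_lin_indep[OF K fin S(2)] S(3) by simp
qed

lemma rk_Suc:
  fixes x :: "nat \<Rightarrow> 'a::{field,finite}"
  assumes K: "is_subfield K"
  shows "rk K (Suc n) x = (if x n \<in> coord_span K n x then rk K n x else Suc (rk K n x))"
proof -
  have "card K ^ rk K (Suc n) x = card K ^ (if x n \<in> coord_span K n x then rk K n x else Suc (rk K n x))"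
  proof (cases "x n \<in> coord_span K n x")
    case True
    then show ?thesis by (metis card_coord_span[OF K] coord_span_Suc_absorb[OF K True])
  next
    case False
    then show ?thesis using card_coord_span_Suc[OF K False] card_coord_span[OF K] by simp
  qed
  moreover have "1 < card K" using card_subfield_ge_2[OF K] by simp
  ultimately show ?thesis by (simp add: power_inject_exp)
qed

lemma rk_fun_upd:
  fixes y :: "nat \<Rightarrow> 'a::{field,finite}"
  assumes "is_subfield K"
  shows "rk K (Suc n) (y(n := a)) = (if a \<in> coord_span K n y then rk K n y else Suc (rk K n y))"
proof -
  have "rk K n (y(n := a)) = rk K n y" by (rule rk_cong) simp
  moreover have "coord_span K n (y(n := a)) = coord_span K n y" by (rule coord_span_cong) simp
  ultimately show ?thesis using rk_Suc[OF assms, of n "y(n := a)"] by simp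
qed

lemma rk_le_card_support:
  assumes K: "is_subfield K" and "finite A" and support: "\<And>i. i < n \<Longrightarrow> x i \<noteq> 0 \<Longrightarrow> i \<in> A"
  shows "rk K n x \<le> card A"
proof -
  obtain S where S: "S \<subseteq> {0..<n}" "lin_indep_over K x S" "card S = rk K n x"
    using rk_attained by blast
  have "S \<subseteq> A"
    using S support lin_indep_over_nonzero[OF K finite_subset[OF S(1)] S(2)] by auto
  then show ?thesis using S(3) card_mono[OF \<open>finite A\<close>] by metis
qed

lemma card_vecs_Pi: "card {x \<in> vecs n. \<forall>i<n. x i \<in> A i} = (\<Prod>i<n. card (A i))"
proof -
  have "bij_betw (\<lambda>x. restrict x {..<n}) {x \<in> vecs n. \<forall>i<n. x i \<in> A i} (Pi\<^sub>E {..<n} A)"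
    by (rule bij_betw_byWitness[where f' = "\<lambda>y i. if i < n then y i else 0"])
      (auto simp: vecs_def fun_eq_iff PiE_def extensional_def)
  then show ?thesis by (simp add: bij_betw_same_card card_PiE)
qed

lemma card_vecs: "card (vecs n :: (nat \<Rightarrow> 'a::{zero,finite}) set) = card (UNIV :: 'a set) ^ n"
  using card_vecs_Pi[of n "\<lambda>_. UNIV :: 'a set"] by simp

lemma finite_vecs: "finite (vecs n :: (nat \<Rightarrow> 'a::{zero,finite}) set)"
  using card_vecs[where 'a = 'a, of n] by (intro card_ge_0_finite) (simp add: finite_UNIV_card_ge_0)

lemma card_vecs_Suc_filter:
  "card {x \<in> vecs (Suc n). P x} = (\<Sum>y\<in>vecs n. card {a::'a::{zero,finite}. P (y(n := a))})"
proof -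
  have "bij_betw (\<lambda>(y, a). y(n := a)) (SIGMA y:vecs n. {a. P (y(n := a))}) {x \<in> vecs (Suc n). P x}"
    by (rule bij_betw_byWitness[where f' = "\<lambda>x. (x(n := 0), x n)"]) (auto simp: vecs_def)
  then show ?thesis by (simp add: bij_betw_same_card[symmetric] card_SigmaI finite_vecs)
qed

lemma exists_full_rank:
  fixes K :: "'a::{field,finite} set"
  assumes K: "is_subfield K" and card_UNIV: "card (UNIV :: 'a set) = card K ^ m" and "k \<le> m"
  shows "\<exists>x \<in> vecs k. rk K k x = k"
  using \<open>k \<le> m\<close>
proof (induction k)
  case 0
  have "(\<lambda>_. 0) \<in> (vecs 0 :: (nat \<Rightarrow> 'a) set)" by (simp add: vecs_def)
  then show ?case using rk_le[of K 0] by blast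
next
  case (Suc k)
  then obtain x :: "nat \<Rightarrow> 'a" where x: "x \<in> vecs k" "rk K k x = k" by auto
  have "card (coord_span K k x) < card (UNIV :: 'a set)"
    using Suc.prems card_subfield_ge_2[OF K]
    by (simp add: card_coord_span[OF K] x(2) card_UNIV power_strict_increasing)
  then have "coord_span K k x \<noteq> UNIV" by auto
  then obtain a where a: "a \<notin> coord_span K k x" by blast
  have "x(k := a) \<in> vecs (Suc k)" using x(1) by (auto simp: vecs_def)
  moreover have "rk K (Suc k) (x(k := a)) = Suc k" using rk_fun_upd[OF K] a x(2) by simp
  ultimately show ?case by blast
qed

section \<open>Number of vectors of given rank\<close>

definition rank_count :: "'a::field set \<Rightarrow> nat \<Rightarrow> nat \<Rightarrow> nat" where
  "rank_count K n u = card {x \<in> vecs n. rk K n x = u}"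

lemma real_card_rank_fiber:
  fixes y :: "nat \<Rightarrow> 'a::{field,finite}"
  assumes K: "is_subfield K"
  shows "real (card {a. rk K (Suc n) (y(n := a)) = u}) =
    (if rk K n y = u then real (card K) ^ u else 0) +
    (if Suc (rk K n y) = u then real (card (UNIV :: 'a set)) - real (card K) ^ rk K n y else 0)"
proof (cases "rk K n y = u")
  case True
  then have "{a. rk K (Suc n) (y(n := a)) = u} = coord_span K n y"
    using rk_fun_upd[OF K, of n y] by auto
  then show ?thesis using True card_coord_span[OF K] by simp
next
  case False
  then have "{a. rk K (Suc n) (y(n := a)) = u} = (if Suc (rk K n y) = u then UNIV - coord_span K n y else {})"
    using rk_fun_upd[OF K, of n y] by auto
  moreover have "real (card (UNIV - coord_span K n y)) = real (card (UNIV :: 'a set)) - real (card K) ^ rk K n y"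
    by (simp add: card_Diff_subset card_mono of_nat_diff card_coord_span[OF K, symmetric])
  ultimately show ?thesis using False by simp
qed

lemma real_rank_count_Suc:
  fixes K :: "'a::{field,finite} set"
  assumes "is_subfield K"
  shows "real (rank_count K (Suc n) u) = real (card K) ^ u * real (rank_count K n u) +
    (\<Sum>y\<in>vecs n. if Suc (rk K n y) = u then real (card (UNIV :: 'a set)) - real (card K) ^ rk K n y else 0)"
proof -
  have "real (rank_count K (Suc n) u) = (\<Sum>y\<in>vecs n. real (card {a::'a. rk K (Suc n) (y(n := a)) = u}))"
    unfolding rank_count_def card_vecs_Suc_filter by simp
  also have "\<dots> = (\<Sum>y\<in>vecs n. if rk K n y = u then real (card K) ^ u else 0) +
      (\<Sum>y\<in>vecs n. if Suc (rk K n y) = u then real (card (UNIV :: 'a set)) - real (card K) ^ rk K n y else 0)"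
    unfolding real_card_rank_fiber[OF assms] sum.distrib ..
  finally show ?thesis
    by (simp add: rank_count_def sum.inter_filter[symmetric] finite_vecs)
qed

lemma rank_count_Suc_0: "is_subfield K \<Longrightarrow> rank_count K (Suc n) 0 = rank_count (K :: 'a::{field,finite} set) n 0"
  using real_rank_count_Suc[of K n 0] by simp

lemma real_rank_count_Suc_Suc:
  fixes K :: "'a::{field,finite} set"
  assumes "is_subfield K"
  shows "real (rank_count K (Suc n) (Suc v)) = real (card K) ^ Suc v * real (rank_count K n (Suc v)) +
    (real (card (UNIV :: 'a set)) - real (card K) ^ v) * real (rank_count K n v)"
  using real_rank_count_Suc[OF assms, of n "Suc v"]
  by (simp add: rank_count_def sum.inter_filter[symmetric] finite_vecs cong: if_cong)

lemma alpha_Suc: "alpha q m (Suc u) = alpha q m u * (real q ^ m - real q ^ u)"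
  by (simp add: alpha_def)

lemma alpha_Suc_Suc: "alpha q (Suc n) (Suc v) = (real q ^ Suc n - 1) * real q ^ v * alpha q n v"
proof -
  have "alpha q (Suc n) (Suc v) = (real q ^ Suc n - 1) * (\<Prod>i<v. real q * (real q ^ n - real q ^ i))"
    unfolding alpha_def by (subst prod.lessThan_Suc_shift) (simp add: algebra_simps)
  then show ?thesis by (simp add: prod.distrib alpha_def)
qed

lemma alpha_pos: "1 < q \<Longrightarrow> 0 < alpha q v v"
  unfolding alpha_def by (intro prod_pos) (simp add: power_strict_increasing)

lemma gauss_binom_0_right [simp]: "gauss_binom q n 0 = 1"
  by (simp add: gauss_binom_def alpha_def)

lemma gauss_binom_0_Suc [simp]: "gauss_binom q 0 (Suc v) = 0"
  unfolding gauss_binom_def alpha_def by (subst prod.lessThan_Suc_shift) simp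

lemma gauss_binom_Suc_Suc:
  assumes "1 < q"
  shows "gauss_binom q (Suc n) (Suc v) = real q ^ Suc v * gauss_binom q n (Suc v) + gauss_binom q n v"
proof -
  have identity: "(Q * N - 1) * t * A / ((Q * t - 1) * t * B) =
      Q * t * (A * (N - t) / ((Q * t - 1) * t * B)) + A / B"
    if "Q * t - 1 \<noteq> 0" "t \<noteq> 0" "B \<noteq> 0" for Q t N A B :: real
    using that by (simp add: field_simps)
  have "real q * real q ^ v - 1 \<noteq> 0" "real q ^ v \<noteq> 0" "alpha q v v \<noteq> 0"
    using assms alpha_pos[OF assms, of v] one_less_power[of "real q" "Suc v"] by auto
  from identity[OF this, of "real q ^ n" "alpha q n v"] show ?thesis
    unfolding gauss_binom_def alpha_Suc_Suc alpha_Suc[of q n v] by (simp add: mult.assoc)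
qed

lemma real_rank_count:
  fixes K :: "'a::{field,finite} set"
  assumes K: "is_subfield K" and card_UNIV: "card (UNIV :: 'a set) = card K ^ m"
  shows "real (rank_count K n u) = gauss_binom (card K) n u * alpha (card K) m u"
proof (induction n arbitrary: u)
  case 0
  have "vecs 0 = {\<lambda>_. 0 :: 'a}" by (auto simp: vecs_def)
  then show ?case using rk_le[of K 0] by (cases u) (simp_all add: rank_count_def alpha_def)
next
  case (Suc n)
  show ?case
  proof (cases u)
    case 0
    then show ?thesis using Suc.IH rank_count_Suc_0[OF K] by (simp add: alpha_def)
  next
    case (Suc v)
    have "1 < card K" using card_subfield_ge_2[OF K] by simp
    then show ?thesis
      unfolding Suc real_rank_count_Suc_Suc[OF K] Suc.IH gauss_binom_Suc_Suc[OF \<open>1 < card K\<close>] alpha_Suc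
      by (simp add: card_UNIV algebra_simps)
  qed
qed

lemma real_card_rank_le_eq_ball_vol:
  fixes K :: "'a::{field,finite} set"
  assumes "is_subfield K" and "card (UNIV :: 'a set) = card K ^ m"
  shows "real (card {x \<in> vecs n. rk K n x \<le> r}) = ball_vol (card K) m n r"
proof (induction r)
  case 0
  then show ?case using real_rank_count[OF assms, of n 0] by (simp add: ball_vol_def rank_count_def)
next
  case (Suc r)
  have "{x \<in> vecs n. rk K n x \<le> Suc r} = {x \<in> vecs n. rk K n x \<le> r} \<union> {x \<in> vecs n. rk K n x = Suc r}"
    by auto
  then have "card {x \<in> vecs n. rk K n x \<le> Suc r} = card {x \<in> vecs n. rk K n x \<le> r} + rank_count K n (Suc r)"
    unfolding rank_count_def by (simp add: card_Un_disjoint finite_vecs disjoint_iff)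
  then show ?case using Suc.IH real_rank_count[OF assms, of n "Suc r"] by (simp add: ball_vol_def)
qed

section \<open>Rank balls\<close>

definition rank_ball ::
    "'a::field set \<Rightarrow> nat \<Rightarrow> nat \<Rightarrow> (nat \<Rightarrow> 'a) \<Rightarrow> (nat \<Rightarrow> 'a) set" where
  "rank_ball K n r c = {x \<in> vecs n. rank_dist K n x c \<le> r}"

lemma rank_ball_zero: "rank_ball K n r (\<lambda>_. 0) = {x \<in> vecs n. rk K n x \<le> r}"
  by (simp add: rank_ball_def rank_dist_def)

lemma finite_rank_ball: "finite (rank_ball K n r (c :: nat \<Rightarrow> 'a::{field,finite}))"
  unfolding rank_ball_def using finite_vecs by (rule finite_subset[rotated]) blast

lemma card_rank_ball_translate:
  assumes "c \<in> vecs n"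
  shows "card (rank_ball K n r c) = card (rank_ball K n r (\<lambda>_. 0))"
proof -
  have "bij_betw (\<lambda>x i. x i - c i) (rank_ball K n r c) (rank_ball K n r (\<lambda>_. 0))"
    by (rule bij_betw_byWitness[where f' = "\<lambda>z i. z i + c i"])
      (use assms in \<open>auto simp: rank_ball_def rank_dist_def vecs_def\<close>)
  then show ?thesis by (rule bij_betw_same_card)
qed

lemma rank_cov_radius_covers:
  fixes C :: "(nat \<Rightarrow> 'a::{field,finite}) set"
  assumes "C \<subseteq> vecs n" "C \<noteq> {}" "x \<in> vecs n"
  shows "\<exists>c\<in>C. x \<in> rank_ball K n (rank_cov_radius K n C) c"
proof -
  have "finite C" using assms(1) finite_vecs by (rule finite_subset)
  then have "Min (rank_dist K n x ` C) \<in> rank_dist K n x ` C" using assms(2) by (intro Min_in) auto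
  then obtain c where "c \<in> C" "rank_dist K n x c = Min (rank_dist K n x ` C)" by auto
  moreover have "Min (rank_dist K n x ` C) \<le> rank_cov_radius K n C"
    unfolding rank_cov_radius_def using assms(3) finite_vecs by (intro Max_ge) auto
  ultimately have "c \<in> C \<and> x \<in> rank_ball K n (rank_cov_radius K n C) c"
    using assms(3) unfolding rank_ball_def by simp
  then show ?thesis by blast
qed

lemma coord_span_eq_short:
  fixes x :: "nat \<Rightarrow> 'a::{field,finite}"
  assumes K: "is_subfield K"
  shows "\<exists>w \<in> vecs (rk K n x). coord_span K (rk K n x) w = coord_span K n x"
proof (induction n)
  case 0
  have "(\<lambda>_. 0) \<in> (vecs 0 :: (nat \<Rightarrow> 'a) set)" by (simp add: vecs_def)
  moreover have "coord_span K 0 (\<lambda>_. 0) = coord_span K 0 x" by (rule coord_span_cong) simp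
  ultimately show ?case using rk_le[of K 0 x] by auto
next
  case (Suc n)
  then obtain w where w: "w \<in> vecs (rk K n x)" "coord_span K (rk K n x) w = coord_span K n x" by blast
  show ?case
  proof (cases "x n \<in> coord_span K n x")
    case True
    then show ?thesis using w rk_Suc[OF K, of n x] coord_span_Suc_absorb[OF K True] by auto
  next
    case False
    let ?r = "rk K n x"
    have "w(?r := x n) \<in> vecs (Suc ?r)" using w(1) by (auto simp: vecs_def)
    moreover have "coord_span K ?r (w(?r := x n)) = coord_span K ?r w" by (rule coord_span_cong) simp
    then have "coord_span K (Suc ?r) (w(?r := x n)) = coord_span K (Suc n) x"
      unfolding coord_span_Suc using w(2) by simp
    moreover have "rk K (Suc n) x = Suc ?r" using rk_Suc[OF K, of n x] False by simp
    ultimately show ?thesis by auto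
  qed
qed

lemma coord_span_vecs_extend:
  assumes K: "is_subfield K" and w: "w \<in> vecs r" and "r \<le> s"
  shows "coord_span K s w = coord_span K r w"
  using \<open>r \<le> s\<close>
proof (induction s rule: dec_induct)
  case (step s)
  have "w s = 0" using w \<open>r \<le> s\<close> by (simp add: vecs_def)
  then have "w s \<in> coord_span K s w" using subspace_coord_span[OF K] unfolding subspace_over_def by simp
  then show ?case using coord_span_Suc_absorb[OF K] step.IH by simp
qed simp

lemma rank_le_subset_UN_coord_span:
  fixes K :: "'a::{field,finite} set"
  assumes K: "is_subfield K"
  shows "{x \<in> vecs n. rk K n x \<le> r} \<subseteq> (\<Union>w\<in>vecs r. {x \<in> vecs n. \<forall>i<n. x i \<in> coord_span K r w})"
proof clarify
  fix x :: "nat \<Rightarrow> 'a" assume x: "x \<in> vecs n" "rk K n x \<le> r"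
  obtain w where w: "w \<in> vecs (rk K n x)" "coord_span K (rk K n x) w = coord_span K n x"
    using coord_span_eq_short[OF K] by blast
  have "w \<in> vecs r" using w(1) x(2) by (auto simp: vecs_def)
  moreover have "coord_span K r w = coord_span K n x"
    using coord_span_vecs_extend[OF K w(1) x(2)] w(2) by simp
  then have "\<forall>i<n. x i \<in> coord_span K r w"
    unfolding coord_span_def using span_over_superset[OF K] by simp
  ultimately show "x \<in> (\<Union>w\<in>vecs r. {x \<in> vecs n. \<forall>i<n. x i \<in> coord_span K r w})"
    using x(1) by blast
qed

lemma card_UN_le_common_point:
  assumes "finite I" "\<And>i. i \<in> I \<Longrightarrow> finite (A i)" "\<And>i. i \<in> I \<Longrightarrow> z \<in> A i"
  shows "card (\<Union>i\<in>I. A i) \<le> Suc (\<Sum>i\<in>I. card (A i) - 1)"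
proof -
  have "card (\<Union>i\<in>I. A i) \<le> card (insert z (\<Union>i\<in>I. A i - {z}))"
    using assms by (intro card_mono) auto
  also have "\<dots> = Suc (card (\<Union>i\<in>I. A i - {z}))"
    using assms by (intro card_insert_disjoint) auto
  also have "card (\<Union>i\<in>I. A i - {z}) \<le> (\<Sum>i\<in>I. card (A i - {z}))"
    using assms(1) by (rule card_UN_le)
  also have "\<dots> = (\<Sum>i\<in>I. card (A i) - 1)"
    using assms by (intro sum.cong) (simp_all add: card_Diff_singleton)
  finally show ?thesis by simp
qed

lemma card_rank_le_less:
  fixes K :: "'a::{field,finite} set"
  assumes K: "is_subfield K" and "1 \<le> r" and "1 < card (UNIV :: 'a set)"
  shows "card {x \<in> vecs n. rk K n x \<le> r} < card (UNIV :: 'a set) ^ r * (card K ^ r) ^ n"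
proof -
  define T where "T w = {x \<in> vecs n. \<forall>i<n. x i \<in> coord_span K r w}" for w :: "nat \<Rightarrow> 'a"
  define X where "X = (card K ^ r) ^ n"
  have finite_T: "finite (T w)" for w
    unfolding T_def using finite_vecs by (rule finite_subset[rotated]) blast
  have card_T: "card (T w) \<le> X" for w
  proof -
    have "card (T w) = (card K ^ rk K r w) ^ n"
      unfolding T_def card_vecs_Pi card_coord_span[OF K] by simp
    also have "\<dots> \<le> X"
      unfolding X_def using card_subfield_ge_2[OF K] rk_le[of K r w]
      by (intro power_mono power_increasing) auto
    finally show ?thesis .
  qed
  have "{x \<in> vecs n. rk K n x \<le> r} \<subseteq> (\<Union>w\<in>vecs r. T w)"
    unfolding T_def by (rule rank_le_subset_UN_coord_span[OF K])
  then have "card {x \<in> vecs n. rk K n x \<le> r} \<le> card (\<Union>w\<in>vecs r. T w)"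
    by (rule card_mono[rotated]) (simp add: finite_T finite_vecs)
  also have "\<dots> \<le> Suc (\<Sum>w\<in>vecs r. card (T w) - 1)"
    using subspace_coord_span[OF K] finite_T finite_vecs
    by (intro card_UN_le_common_point[where z = "\<lambda>_. 0"]) (auto simp: T_def vecs_def subspace_over_def)
  also have "\<dots> \<le> Suc (card (UNIV :: 'a set) ^ r * (X - 1))"
    using sum_mono[of "vecs r" "\<lambda>w. card (T w) - 1" "\<lambda>_. X - 1"] card_T
    by (simp add: card_vecs diff_le_mono)
  also have "\<dots> < card (UNIV :: 'a set) ^ r * X"
  proof -
    have "1 \<le> X" unfolding X_def using card_subfield_ge_2[OF K] by simp
    moreover have "1 < card (UNIV :: 'a set) ^ r" using assms(2,3) by (intro one_less_power) auto
    ultimately show ?thesis by (cases X) auto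
  qed
  finally show ?thesis unfolding X_def .
qed

lemma card_rank_le_less_power_min:
  fixes K :: "'a::{field,finite} set"
  assumes K: "is_subfield K" and card_UNIV: "card (UNIV :: 'a set) = card K ^ m"
    and "0 < \<rho>" "\<rho> < n" "n \<le> m"
  shows "card {x \<in> vecs n. rk K n x \<le> \<rho>} < card (UNIV :: 'a set) ^ min n (2 * \<rho>)"
proof (cases "n \<le> 2 * \<rho>")
  case True
  obtain z where "z \<in> vecs n" "rk K n z = n" using exists_full_rank[OF K card_UNIV \<open>n \<le> m\<close>] by blast
  then have "{x \<in> vecs n. rk K n x \<le> \<rho>} \<subset> vecs n" using \<open>\<rho> < n\<close> by force
  then have "card {x \<in> vecs n. rk K n x \<le> \<rho>} < card (vecs n :: (nat \<Rightarrow> 'a) set)"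
    by (rule psubset_card_mono[OF finite_vecs])
  then show ?thesis using True by (simp add: card_vecs)
next
  case False
  have "1 < card (UNIV :: 'a set)"
    unfolding card_UNIV using card_subfield_ge_2[OF K] assms(3-5) by (intro one_less_power) auto
  then have "card {x \<in> vecs n. rk K n x \<le> \<rho>} < card (UNIV :: 'a set) ^ \<rho> * (card K ^ \<rho>) ^ n"
    using assms(3) by (intro card_rank_le_less[OF K]) auto
  also have "(card K ^ \<rho>) ^ n \<le> card (UNIV :: 'a set) ^ \<rho>"
    unfolding card_UNIV power_mult[symmetric]
    using card_subfield_ge_2[OF K] \<open>n \<le> m\<close> by (intro power_increasing) auto
  then have "card (UNIV :: 'a set) ^ \<rho> * (card K ^ \<rho>) ^ n \<le> card (UNIV :: 'a set) ^ (2 * \<rho>)"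
    by (simp add: mult_2 power_add)
  finally show ?thesis using False by simp
qed

lemma card_code_le_of_disjoint_rank_balls:
  fixes C :: "(nat \<Rightarrow> 'a::{field,finite}) set"
  assumes K: "is_subfield K" and "C \<subseteq> vecs n"
    and disjoint: "\<And>c c'. c \<in> C \<Longrightarrow> c' \<in> C \<Longrightarrow> c \<noteq> c' \<Longrightarrow>
      rank_ball K n \<rho> c \<inter> rank_ball K n \<rho> c' = {}"
  shows "card C \<le> card (UNIV :: 'a set) ^ (n - 2 * \<rho>)"
proof -
  define p where "p = n - 2 * \<rho>"
  define prefix where "prefix c = (\<lambda>i. if i < p then c i else 0)" for c :: "nat \<Rightarrow> 'a"
  have "inj_on prefix C"
  proof (rule inj_onI, rule ccontr)
    fix c c' assume c: "c \<in> C" "c' \<in> C" and eq: "prefix c = prefix c'" and "c \<noteq> c'"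
    have agree: "c i = c' i" if "i < p" for i
      using fun_cong[OF eq, of i] that by (simp add: prefix_def)
    define y where "y = (\<lambda>i. if i < p + \<rho> then c' i else c i)"
    have "y \<in> vecs n" using c assms(2) unfolding y_def vecs_def by auto
    moreover have "rank_dist K n y c \<le> card {p..<p + \<rho>}"
      unfolding rank_dist_def
    proof (rule rk_le_card_support[OF K])
      fix i assume "y i - c i \<noteq> 0"
      then show "i \<in> {p..<p + \<rho>}" using agree[of i] by (cases "i < p") (auto simp: y_def split: if_splits)
    qed simp
    moreover have "rank_dist K n y c' \<le> card {p + \<rho>..<n}"
      unfolding rank_dist_def by (intro rk_le_card_support[OF K]) (auto simp: y_def not_less split: if_splits)
    ultimately have "y \<in> rank_ball K n \<rho> c \<inter> rank_ball K n \<rho> c'"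
      unfolding rank_ball_def p_def by auto
    then show False using disjoint c \<open>c \<noteq> c'\<close> by blast
  qed
  moreover have "prefix ` C \<subseteq> vecs p" unfolding prefix_def vecs_def by auto
  ultimately show ?thesis
    using card_mono[OF finite_vecs, of "prefix ` C" p] by (simp add: card_image card_vecs p_def)
qed

lemma card_UN_less_sum:
  assumes "finite I" "\<And>k. k \<in> I \<Longrightarrow> finite (A k)"
    and "i \<in> I" "j \<in> I" "i \<noteq> j" "A i \<inter> A j \<noteq> {}"
  shows "card (\<Union>k\<in>I. A k) < (\<Sum>k\<in>I. card (A k))"
proof -
  define R where "R = (\<Union>k\<in>I - {i}. A k)"
  have "finite R" unfolding R_def using assms(1,2) by blast
  have "A i \<inter> R \<noteq> {}" unfolding R_def using assms(4-6) by blast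
  then have "0 < card (A i \<inter> R)" using \<open>finite R\<close> by (simp add: card_gt_0_iff)
  moreover have "card (A i) + card R = card (A i \<union> R) + card (A i \<inter> R)"
    using assms(2,3) \<open>finite R\<close> by (intro card_Un_Int) auto
  moreover have "card R \<le> (\<Sum>k\<in>I - {i}. card (A k))"
    unfolding R_def using assms(1) by (intro card_UN_le) simp
  moreover have "(\<Sum>k\<in>I. card (A k)) = card (A i) + (\<Sum>k\<in>I - {i}. card (A k))"
    using assms(1,3) by (rule sum.remove)
  moreover have "(\<Union>k\<in>I. A k) = A i \<union> R" unfolding R_def using assms(3) by blast
  ultimately show ?thesis by simp
qed

lemma card_vecs_less_card_code_mult_card_rank_le:
  fixes C :: "(nat \<Rightarrow> 'a::{field,finite}) set"
  assumes K: "is_subfield K" and card_UNIV: "card (UNIV :: 'a set) = card K ^ m"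
    and "0 < \<rho>" "\<rho> < n" "n \<le> m"
    and C: "C \<subseteq> vecs n" "C \<noteq> {}" "rank_cov_radius K n C = \<rho>"
  shows "card (vecs n :: (nat \<Rightarrow> 'a) set) < card C * card {x \<in> vecs n. rk K n x \<le> \<rho>}"
proof -
  let ?B = "rank_ball K n \<rho>" and ?V = "card {x \<in> vecs n. rk K n x \<le> \<rho>}"
  have "finite C" using C(1) finite_vecs by (rule finite_subset)
  have cover: "vecs n = (\<Union>c\<in>C. ?B c)"
    using rank_cov_radius_covers[OF C(1,2)] C(3) by (auto simp: rank_ball_def)
  have "card (?B c) = ?V" if "c \<in> C" for c
    using card_rank_ball_translate[of c n K \<rho>] C(1) that unfolding rank_ball_zero by blast
  then have "(\<Sum>c\<in>C. card (?B c)) = (\<Sum>c\<in>C. ?V)" by (rule sum.cong[OF refl])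
  then have sum_eq: "(\<Sum>c\<in>C. card (?B c)) = card C * ?V" by simp
  show ?thesis
  proof (cases "\<exists>c\<in>C. \<exists>c'\<in>C. c \<noteq> c' \<and> ?B c \<inter> ?B c' \<noteq> {}")
    case True
    then obtain c c' where "c \<in> C" "c' \<in> C" "c \<noteq> c'" "?B c \<inter> ?B c' \<noteq> {}" by blast
    then have "card (\<Union>c\<in>C. ?B c) < (\<Sum>c\<in>C. card (?B c))"
      using card_UN_less_sum[of C ?B c c'] \<open>finite C\<close> finite_rank_ball by blast
    then show ?thesis using cover sum_eq by simp
  next
    case False
    then have "card C \<le> card (UNIV :: 'a set) ^ (n - 2 * \<rho>)"
      by (intro card_code_le_of_disjoint_rank_balls[OF K C(1)]) blast
    moreover have "?V < card (UNIV :: 'a set) ^ min n (2 * \<rho>)"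
      by (rule card_rank_le_less_power_min[OF K card_UNIV assms(3-5)])
    moreover have "0 < card C" using \<open>finite C\<close> C(2) by (simp add: card_gt_0_iff)
    ultimately have "card C * ?V < card (UNIV :: 'a set) ^ (n - 2 * \<rho>) * card (UNIV :: 'a set) ^ min n (2 * \<rho>)"
      by (intro mult_le_less_imp_less) auto
    also have "\<dots> = card (vecs n :: (nat \<Rightarrow> 'a) set)"
      by (simp add: card_vecs power_add[symmetric] min_def)
    also have "\<dots> \<le> card C * ?V"
      using card_UN_le[OF \<open>finite C\<close>, of ?B] cover sum_eq by simp
    finally show ?thesis by simp
  qed
qed

lemma power_less_card_code_mult_ball_vol:
  fixes C :: "(nat \<Rightarrow> 'a::{field,finite}) set"
  assumes K: "is_subfield K" and card_UNIV: "card (UNIV :: 'a set) = card K ^ m"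
    and "0 < \<rho>" "\<rho> < n" "n \<le> m"
    and "C \<subseteq> vecs n" "C \<noteq> {}" "rank_cov_radius K n C = \<rho>"
  shows "real (card K) ^ (m * n) < real (card C) * ball_vol (card K) m n \<rho>"
proof -
  have "card K ^ (m * n) < card C * card {x \<in> vecs n. rk K n x \<le> \<rho>}"
    using card_vecs_less_card_code_mult_card_rank_le[OF assms] card_UNIV
    by (simp add: card_vecs power_mult)
  then have "real (card K ^ (m * n)) < real (card C) * real (card {x \<in> vecs n. rk K n x \<le> \<rho>})"
    by (simp only: of_nat_mult[symmetric] of_nat_less_iff)
  then show ?thesis using real_card_rank_le_eq_ball_vol[OF K card_UNIV, of n \<rho>] by simp
qed

lemma ball_vol_pos:
  fixes K :: "'a::{field,finite} set"
  assumes "is_subfield K" and "card (UNIV :: 'a set) = card K ^ m"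
  shows "0 < ball_vol (card K) m n r"
proof -
  have "rk K n (\<lambda>_. 0 :: 'a) \<le> card ({} :: nat set)"
    by (rule rk_le_card_support[OF assms(1)]) simp_all
  then have "(\<lambda>_. 0) \<in> {x \<in> vecs n. rk K n x \<le> r}" by (simp add: vecs_def)
  moreover have "finite {x \<in> vecs n. rk K n x \<le> r}"
    using finite_vecs by (rule finite_subset[rotated]) blast
  ultimately have "0 < card {x \<in> vecs n. rk K n x \<le> r}" by (auto simp: card_gt_0_iff)
  then show ?thesis using real_card_rank_le_eq_ball_vol[OF assms, of n r] by simp
qed

section \<open>Covering codes\<close>

definition zero_prefix_code :: "nat \<Rightarrow> nat \<Rightarrow> (nat \<Rightarrow> 'a::zero) set" where
  "zero_prefix_code n r = {x \<in> vecs n. \<forall>i<r. x i = 0}"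

lemma card_zero_prefix_code:
  "card (zero_prefix_code n r :: (nat \<Rightarrow> 'a::{zero,finite}) set) = card (UNIV :: 'a set) ^ (n - r)"
proof -
  have "zero_prefix_code n r = {x \<in> vecs n. \<forall>i<n. x i \<in> (if i < r then {0} else (UNIV :: 'a set))}"
    unfolding zero_prefix_code_def vecs_def by auto
  moreover have "{..<n} \<inter> - {i. i < r} = {r..<n}" by auto
  ultimately show ?thesis by (simp add: card_vecs_Pi if_distrib[of card] prod.If_cases)
qed

lemma rank_cov_radius_zero_prefix_code:
  fixes K :: "'a::{field,finite} set"
  assumes K: "is_subfield K" and card_UNIV: "card (UNIV :: 'a set) = card K ^ m"
    and "\<rho> \<le> m" "\<rho> \<le> n"
  shows "rank_cov_radius K n (zero_prefix_code n \<rho>) = \<rho>"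
proof -
  let ?C = "zero_prefix_code n \<rho> :: (nat \<Rightarrow> 'a) set"
  let ?d = "\<lambda>x. Min (rank_dist K n x ` ?C)"
  have "finite ?C" unfolding zero_prefix_code_def using finite_vecs by (rule finite_subset[rotated]) blast
  have "(\<lambda>_. 0) \<in> ?C" by (simp add: zero_prefix_code_def vecs_def)
  have d_le: "?d x \<le> \<rho>" if "x \<in> vecs n" for x
  proof -
    define c where "c = (\<lambda>i. if i < \<rho> then 0 else x i)"
    have "c \<in> ?C" using that by (simp add: c_def zero_prefix_code_def vecs_def)
    then have "?d x \<le> rank_dist K n x c" using \<open>finite ?C\<close> by (intro Min_le) auto
    also have "\<dots> \<le> card {0..<\<rho>}"
      unfolding rank_dist_def by (intro rk_le_card_support[OF K]) (auto simp: c_def split: if_splits)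
    finally show ?thesis by simp
  qed
  obtain z where z: "z \<in> vecs \<rho>" "rk K \<rho> z = \<rho>"
    using exists_full_rank[OF K card_UNIV \<open>\<rho> \<le> m\<close>] by blast
  have "z \<in> vecs n" using z(1) \<open>\<rho> \<le> n\<close> by (simp add: vecs_def)
  have "\<rho> \<le> rank_dist K n z c" if "c \<in> ?C" for c
  proof -
    have "rk K \<rho> (\<lambda>i. z i - c i) = rk K \<rho> z"
      using that by (intro rk_cong) (simp add: zero_prefix_code_def)
    then show ?thesis using rk_mono[OF \<open>\<rho> \<le> n\<close>, of K "\<lambda>i. z i - c i"] z(2) by (simp add: rank_dist_def)
  qed
  then have "\<rho> \<le> ?d z" using \<open>finite ?C\<close> \<open>(\<lambda>_. 0) \<in> ?C\<close> by (subst Min_ge_iff) auto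
  with d_le[OF \<open>z \<in> vecs n\<close>] have "?d z = \<rho>" by simp
  then have "\<rho> \<in> ?d ` vecs n" using \<open>z \<in> vecs n\<close> by (intro image_eqI[where x = z]) auto
  then show ?thesis
    unfolding rank_cov_radius_def using d_le finite_vecs by (intro Max_eqI) auto
qed

lemma K_R_le_card:
  "C \<subseteq> vecs n \<Longrightarrow> C \<noteq> {} \<Longrightarrow> rank_cov_radius K n C = \<rho> \<Longrightarrow> K_R K n \<rho> \<le> card C"
  unfolding K_R_def by (intro cInf_lower) auto

lemma K_R_attained:
  assumes "C \<subseteq> vecs n" "C \<noteq> {}" "rank_cov_radius K n C = \<rho>"
  shows "\<exists>C'. C' \<subseteq> vecs n \<and> C' \<noteq> {} \<and> rank_cov_radius K n C' = \<rho> \<and> card C' = K_R K n \<rho>"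
proof -
  have "K_R K n \<rho> \<in> {card C | C. C \<subseteq> vecs n \<and> C \<noteq> {} \<and> rank_cov_radius K n C = \<rho>}"
    unfolding K_R_def using assms by (intro Inf_nat_def1) auto
  then show ?thesis by auto
qed

theorem proposition6:
  fixes K :: "'a::{field,finite} set" and q m n \<rho> :: nat
  assumes "is_subfield K" and "card K = q" and "card (UNIV :: 'a set) = q ^ m"
    and "n \<le> m" and "0 < \<rho>" and "\<rho> < n"
  shows "\<lfloor>real q ^ (m * n) / ball_vol q m n \<rho>\<rfloor> + 1 \<le> int (K_R K n \<rho>)
         \<and> K_R K n \<rho> \<le> q ^ (m * (n - \<rho>))"
proof -
  have card_UNIV: "card (UNIV :: 'a set) = card K ^ m" using assms(2,3) by simp
  let ?C0 = "zero_prefix_code n \<rho> :: (nat \<Rightarrow> 'a) set"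
  have C0: "?C0 \<subseteq> vecs n" "?C0 \<noteq> {}" "rank_cov_radius K n ?C0 = \<rho>"
    using rank_cov_radius_zero_prefix_code[OF assms(1) card_UNIV] assms(4,6)
    by (auto simp: zero_prefix_code_def vecs_def)
  obtain C where C: "C \<subseteq> vecs n" "C \<noteq> {}" "rank_cov_radius K n C = \<rho>" "card C = K_R K n \<rho>"
    using K_R_attained[OF C0] by blast
  have "real q ^ (m * n) < real (K_R K n \<rho>) * ball_vol q m n \<rho>"
    using power_less_card_code_mult_ball_vol[OF assms(1) card_UNIV assms(5,6,4) C(1-3)] C(4) assms(2)
    by simp
  moreover have "0 < ball_vol q m n \<rho>" using ball_vol_pos[OF assms(1) card_UNIV] assms(2) by simp
  ultimately have "\<lfloor>real q ^ (m * n) / ball_vol q m n \<rho>\<rfloor> < int (K_R K n \<rho>)"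
    by (simp add: divide_less_eq floor_less_iff)
  moreover have "K_R K n \<rho> \<le> q ^ (m * (n - \<rho>))"
    using K_R_le_card[OF C0] card_zero_prefix_code[where 'a = 'a] assms(3) by (simp add: power_mult)
  ultimately show ?thesis by simp
qed

end
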